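(* If a graph $G$ has an $\operatorname{IR}(G)$-set that is not independent and the $\operatorname{IR}$-graph $H=G(\operatorname{IR})$ is connected, then $H$ has an induced $4$-cycle or $\operatorname{diam}(H)\geq 3$.
   Context: All graphs are finite and simple. For $G=(V,E)$, $D\subseteq V$, $v\in D$: $\operatorname{PN}(v,D)=N[v]-N[D-\{v\}]$ (closed neighbourhoods). $D$ is irredundant if $\operatorname{PN}(v,D)\neq\varnothing$ for all $v\in D$; $\operatorname{IR}(G)$ is the maximum size of an irredundant set; an $\operatorname{IR}(G)$-set is an irredundant set of that size. $G(\operatorname{IR})$ has the $\operatorname{IR}(G)$-sets as vertices, with $D\sim D'$ iff there exist $u\in D$, $v\in D'$ with $uv\in E(G)$ and $D'=(D-\{u\})\cup\{v\}$. *)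

theory Defs
  imports Main
begin

definition simple_graph :: "'a set \<Rightarrow> ('a \<Rightarrow> 'a \<Rightarrow> bool) \<Rightarrow> bool" where
  "simple_graph V adj \<longleftrightarrow> finite V \<and> (\<forall>u v. adj u v \<longrightarrow> adj v u)
     \<and> (\<forall>v. \<not> adj v v) \<and> (\<forall>u v. adj u v \<longrightarrow> u \<in> V \<and> v \<in> V)"

definition cnbhd :: "'a set \<Rightarrow> ('a \<Rightarrow> 'a \<Rightarrow> bool) \<Rightarrow> 'a \<Rightarrow> 'a set" where
  "cnbhd V adj v = {u \<in> V. u = v \<or> adj v u}"

definition cnbhd_set :: "'a set \<Rightarrow> ('a \<Rightarrow> 'a \<Rightarrow> bool) \<Rightarrow> 'a set \<Rightarrow> 'a set" where
  "cnbhd_set V adj S = (\<Union>v\<in>S. cnbhd V adj v)"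

definition PN :: "'a set \<Rightarrow> ('a \<Rightarrow> 'a \<Rightarrow> bool) \<Rightarrow> 'a \<Rightarrow> 'a set \<Rightarrow> 'a set" where
  "PN V adj v D = cnbhd V adj v - cnbhd_set V adj (D - {v})"

definition irredundant :: "'a set \<Rightarrow> ('a \<Rightarrow> 'a \<Rightarrow> bool) \<Rightarrow> 'a set \<Rightarrow> bool" where
  "irredundant V adj D \<longleftrightarrow> D \<subseteq> V \<and> (\<forall>v\<in>D. PN V adj v D \<noteq> {})"

definition IR :: "'a set \<Rightarrow> ('a \<Rightarrow> 'a \<Rightarrow> bool) \<Rightarrow> nat" where
  "IR V adj = Max {card D | D. irredundant V adj D}"

definition IR_sets :: "'a set \<Rightarrow> ('a \<Rightarrow> 'a \<Rightarrow> bool) \<Rightarrow> 'a set set" where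
  "IR_sets V adj = {D. irredundant V adj D \<and> card D = IR V adj}"

definition IR_adj :: "('a \<Rightarrow> 'a \<Rightarrow> bool) \<Rightarrow> 'a set \<Rightarrow> 'a set \<Rightarrow> bool" where
  "IR_adj adj D D' \<longleftrightarrow> (\<exists>u\<in>D. \<exists>v\<in>D'. adj u v \<and> D' = (D - {u}) \<union> {v})"

definition IR_graph_adj :: "'a set \<Rightarrow> ('a \<Rightarrow> 'a \<Rightarrow> bool) \<Rightarrow> 'a set \<Rightarrow> 'a set \<Rightarrow> bool" where
  "IR_graph_adj V adj D D' \<longleftrightarrow> D \<in> IR_sets V adj \<and> D' \<in> IR_sets V adj \<and> IR_adj adj D D'"

definition independent :: "('a \<Rightarrow> 'a \<Rightarrow> bool) \<Rightarrow> 'a set \<Rightarrow> bool" where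
  "independent adj D \<longleftrightarrow> (\<forall>u\<in>D. \<forall>v\<in>D. \<not> adj u v)"

text \<open>Walks as vertex lists; xs is a walk from x to y of length (length xs - 1).\<close>
definition walk :: "'b set \<Rightarrow> ('b \<Rightarrow> 'b \<Rightarrow> bool) \<Rightarrow> 'b list \<Rightarrow> bool" where
  "walk V adj xs \<longleftrightarrow> xs \<noteq> [] \<and> set xs \<subseteq> V \<and>
     (\<forall>i. Suc i < length xs \<longrightarrow> adj (xs ! i) (xs ! Suc i))"

definition connected_graph :: "'b set \<Rightarrow> ('b \<Rightarrow> 'b \<Rightarrow> bool) \<Rightarrow> bool" where
  "connected_graph V adj \<longleftrightarrow>
     (\<forall>x\<in>V. \<forall>y\<in>V. \<exists>xs. walk V adj xs \<and> hd xs = x \<and> last xs = y)"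

definition dist :: "'b set \<Rightarrow> ('b \<Rightarrow> 'b \<Rightarrow> bool) \<Rightarrow> 'b \<Rightarrow> 'b \<Rightarrow> nat" where
  "dist V adj x y = (LEAST n. \<exists>xs. walk V adj xs \<and> hd xs = x \<and> last xs = y \<and> length xs = Suc n)"

definition diam :: "'b set \<Rightarrow> ('b \<Rightarrow> 'b \<Rightarrow> bool) \<Rightarrow> nat" where
  "diam V adj = Max {dist V adj x y | x y. x \<in> V \<and> y \<in> V}"

definition has_induced_C4 :: "'b set \<Rightarrow> ('b \<Rightarrow> 'b \<Rightarrow> bool) \<Rightarrow> bool" where
  "has_induced_C4 V adj \<longleftrightarrow> (\<exists>a\<in>V. \<exists>b\<in>V. \<exists>c\<in>V. \<exists>d\<in>V.
     distinct [a, b, c, d] \<and> adj a b \<and> adj b c \<and> adj c d \<and> adj d a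
     \<and> \<not> adj a c \<and> \<not> adj b d)"

end

theory Submission
  imports Defs
begin

(* Fix an IR-set X containing an edge xy.  If some third vertex v of X has a neighbour in X,
   choose a private neighbour p u for every u in X: then p ` X is again an IR-set, since each u
   is a private neighbour of p u, but it misses x, y and v.  As one step of the IR-graph exchanges
   a single vertex, p ` X is at distance at least 3 from X.  Otherwise xy is the only edge inside
   X, and exchanging x, y or both for private neighbours x', y' yields the induced 4-cycle
   X, X - x + x', X - x - y + x' + y', X - y + y'. *)

lemma simple_graph_symp: "simple_graph V adj \<Longrightarrow> symp adj"
  unfolding simple_graph_def symp_def by blast

lemma simple_graph_irreflp: "simple_graph V adj \<Longrightarrow> irreflp adj"
  unfolding simple_graph_def irreflp_def by blast

lemma PN_iff:
  "w \<in> PN V adj v D \<longleftrightarrow> w \<in> V \<and> (w = v \<or> adj v w) \<and> (\<forall>u\<in>D - {v}. w \<noteq> u \<and> \<not> adj u w)"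
  unfolding PN_def cnbhd_set_def cnbhd_def by auto

lemma independent_imp_irredundant:
  assumes "D \<subseteq> V" "independent adj D"
  shows "irredundant V adj D"
proof -
  have "v \<in> PN V adj v D" if "v \<in> D" for v
    using assms that unfolding independent_def PN_iff by blast
  then show ?thesis
    using assms(1) unfolding irredundant_def by blast
qed

lemma PN_of_non_isolated:
  assumes "symp adj" "w \<in> X - {u}" "adj w u" "u' \<in> PN V adj u X"
  shows "adj u u'" "u' \<notin> X" "\<And>z. z \<in> X - {u} \<Longrightarrow> \<not> adj z u'"
  using assms by (auto simp: PN_iff dest: sympD)

lemma non_isolated_notin_image_private:
  assumes p: "\<And>u. u \<in> X \<Longrightarrow> p u \<in> PN V adj u X" and "u \<in> X" "w \<in> X - {u}" "adj w u"
  shows "u \<notin> p ` X"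
proof
  assume "u \<in> p ` X"
  then obtain z where z: "z \<in> X" "p z = u" by blast
  with p[OF z(1)] assms(2-4) show False
    by (cases "z = u") (auto simp: PN_iff)
qed

lemma irredundant_image_private:
  assumes "symp adj" "irredundant V adj X" and p: "\<And>u. u \<in> X \<Longrightarrow> p u \<in> PN V adj u X"
  shows "irredundant V adj (p ` X)" "card (p ` X) = card X"
proof -
  have own: "p u = u \<or> adj u (p u)" and apart: "\<And>w. w \<in> X - {u} \<Longrightarrow> p u \<noteq> w \<and> \<not> adj w (p u)"
    if "u \<in> X" for u
    using p[OF that] unfolding PN_iff by blast+
  have "u \<in> PN V adj (p u) (p ` X)" if "u \<in> X" for u
    unfolding PN_iff
  proof (intro conjI)
    show "u \<in> V" using that \<open>irredundant V adj X\<close> unfolding irredundant_def by blast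
    show "u = p u \<or> adj (p u) u" using own[OF that] \<open>symp adj\<close> by (auto dest: sympD)
    show "\<forall>v\<in>p ` X - {p u}. u \<noteq> v \<and> \<not> adj v u"
    proof
      fix v assume "v \<in> p ` X - {p u}"
      then obtain w where w: "w \<in> X" "w \<noteq> u" "v = p w" by blast
      then have "p w \<noteq> u \<and> \<not> adj u (p w)" using apart[of w u] that by auto
      then show "u \<noteq> v \<and> \<not> adj v u" using w \<open>symp adj\<close> by (auto dest: sympD)
    qed
  qed
  moreover have "p ` X \<subseteq> V"
    using p unfolding PN_iff by blast
  ultimately show "irredundant V adj (p ` X)"
    unfolding irredundant_def by blast
  have "inj_on p X"
  proof (rule inj_onI)
    fix u w assume "u \<in> X" "w \<in> X" "p u = p w"
    then show "u = w" using own[of u] apart[of w u] by auto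
  qed
  then show "card (p ` X) = card X"
    by (rule card_image)
qed

lemma walk_nth_Diff_bounded:
  assumes "walk W A xs" and step: "\<And>D D'. A D D' \<Longrightarrow> \<exists>u. D - {u} \<subseteq> D'" and "i < length xs"
  shows "\<exists>S. finite S \<and> card S \<le> i \<and> xs ! 0 - S \<subseteq> xs ! i"
  using \<open>i < length xs\<close>
proof (induction i)
  case 0
  show ?case by (rule exI[of _ "{}"]) simp
next
  case (Suc i)
  then obtain S where S: "finite S" "card S \<le> i" "xs ! 0 - S \<subseteq> xs ! i"
    using Suc_lessD by blast
  have "A (xs ! i) (xs ! Suc i)"
    using \<open>walk W A xs\<close> Suc.prems unfolding walk_def by simp
  then obtain u where "xs ! i - {u} \<subseteq> xs ! Suc i" using step by blast
  with S have "xs ! 0 - insert u S \<subseteq> xs ! Suc i" by blast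
  moreover have "card (insert u S) \<le> Suc i"
    using S by (simp add: card_insert_if)
  ultimately show ?case
    using S(1) by (intro exI[of _ "insert u S"]) simp
qed

lemma walk_of_length_dist:
  assumes "connected_graph W A" "x \<in> W" "y \<in> W"
  shows "\<exists>xs. walk W A xs \<and> hd xs = x \<and> last xs = y \<and> length xs = Suc (dist W A x y)"
proof -
  obtain xs where xs: "walk W A xs" "hd xs = x" "last xs = y"
    using assms unfolding connected_graph_def by blast
  then have "length xs = Suc (length xs - 1)" by (simp add: walk_def)
  with xs have "\<exists>n xs. walk W A xs \<and> hd xs = x \<and> last xs = y \<and> length xs = Suc n"
    by blast
  then show ?thesis
    unfolding dist_def by (rule LeastI_ex)
qed

lemma card_Diff_le_dist:
  assumes "connected_graph W A" "X \<in> W" "Y \<in> W"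
    and step: "\<And>D D'. A D D' \<Longrightarrow> \<exists>u. D - {u} \<subseteq> D'"
  shows "card (X - Y) \<le> dist W A X Y"
proof -
  obtain xs where xs: "walk W A xs" "hd xs = X" "last xs = Y" "length xs = Suc (dist W A X Y)"
    using walk_of_length_dist[OF assms(1-3)] by blast
  then have "xs \<noteq> []" by auto
  with xs have "xs ! 0 = X" "xs ! dist W A X Y = Y"
    by (auto simp: hd_conv_nth last_conv_nth)
  moreover obtain S where "finite S" "card S \<le> dist W A X Y" "xs ! 0 - S \<subseteq> xs ! dist W A X Y"
    using walk_nth_Diff_bounded[OF xs(1) step] xs(4) by auto
  ultimately have "card (X - Y) \<le> card S"
    by (intro card_mono) auto
  with \<open>card S \<le> dist W A X Y\<close> show ?thesis
    by linarith
qed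

lemma dist_le_diam:
  assumes "finite W" "x \<in> W" "y \<in> W"
  shows "dist W A x y \<le> diam W A"
proof -
  have "{dist W A x y |x y. x \<in> W \<and> y \<in> W} = (\<lambda>(x, y). dist W A x y) ` (W \<times> W)"
    by auto
  then have "finite {dist W A x y |x y. x \<in> W \<and> y \<in> W}"
    using assms(1) by simp
  then show ?thesis
    unfolding diam_def by (rule Max_ge) (use assms in blast)
qed

lemma IR_sets_finite: "finite V \<Longrightarrow> finite (IR_sets V adj)"
  by (rule finite_subset[of _ "Pow V"]) (auto simp: IR_sets_def irredundant_def)

lemma IR_sets_subset: "X \<in> IR_sets V adj \<Longrightarrow> X \<subseteq> V"
  by (simp add: IR_sets_def irredundant_def)

lemma IR_sets_irredundant: "X \<in> IR_sets V adj \<Longrightarrow> irredundant V adj X"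
  by (simp add: IR_sets_def)

lemma IR_setsI:
  "irredundant V adj D \<Longrightarrow> card D = card X \<Longrightarrow> X \<in> IR_sets V adj \<Longrightarrow> D \<in> IR_sets V adj"
  by (simp add: IR_sets_def)

lemma IR_graph_adjI:
  assumes "D \<in> IR_sets V adj" "D' \<in> IR_sets V adj" "u \<in> D" "adj u v" "D' = D - {u} \<union> {v}"
  shows "IR_graph_adj V adj D D'"
  using assms unfolding IR_graph_adj_def IR_adj_def by blast

lemma IR_graph_adj_Diff_subset: "IR_graph_adj V adj D D' \<Longrightarrow> \<exists>u. D - {u} \<subseteq> D'"
  unfolding IR_graph_adj_def IR_adj_def by blast

lemma not_IR_graph_adj_if_two_removed:
  assumes "a \<in> D - D'" "b \<in> D - D'" "a \<noteq> b"
  shows "\<not> IR_graph_adj V adj D D'"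
  using assms IR_graph_adj_Diff_subset by blast

lemma card_non_isolated_le_diam_IR_graph:
  assumes "simple_graph V adj" "connected_graph (IR_sets V adj) (IR_graph_adj V adj)"
    and "X \<in> IR_sets V adj" "T \<subseteq> X" and non_isolated: "\<And>u. u \<in> T \<Longrightarrow> \<exists>w\<in>X. adj w u"
  shows "card T \<le> diam (IR_sets V adj) (IR_graph_adj V adj)"
proof -
  have finV: "finite V" using assms(1) by (simp add: simple_graph_def)
  have "\<forall>u\<in>X. \<exists>w. w \<in> PN V adj u X"
    using IR_sets_irredundant[OF assms(3)] unfolding irredundant_def by blast
  then obtain p where p: "\<And>u. u \<in> X \<Longrightarrow> p u \<in> PN V adj u X"
    by (metis bchoice)
  have "irredundant V adj (p ` X)" "card (p ` X) = card X"
    using irredundant_image_private[OF simple_graph_symp[OF assms(1)] IR_sets_irredundant[OF assms(3)] p]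
    by blast+
  then have P: "p ` X \<in> IR_sets V adj"
    using IR_setsI assms(3) by blast
  have "T \<subseteq> X - p ` X"
  proof
    fix u assume "u \<in> T"
    then obtain w where "w \<in> X" "adj w u" "u \<in> X" using non_isolated \<open>T \<subseteq> X\<close> by blast
    moreover have "w \<noteq> u" using \<open>adj w u\<close> simple_graph_irreflp[OF assms(1)] by (auto dest: irreflpD)
    ultimately show "u \<in> X - p ` X" using non_isolated_notin_image_private[OF p] by blast
  qed
  then have "card T \<le> card (X - p ` X)"
    using IR_sets_subset[OF assms(3)] finV by (intro card_mono) (auto intro: finite_subset)
  also have "\<dots> \<le> dist (IR_sets V adj) (IR_graph_adj V adj) X (p ` X)"
    using card_Diff_le_dist[OF assms(2,3) P] IR_graph_adj_Diff_subset by blast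
  also have "\<dots> \<le> diam (IR_sets V adj) (IR_graph_adj V adj)"
    using dist_le_diam[OF IR_sets_finite[OF finV] assms(3) P] .
  finally show ?thesis .
qed

lemma independent_swap_private:
  assumes "symp adj" "irreflp adj"
    and isolated: "\<And>v w. v \<in> X - {x, y} \<Longrightarrow> w \<in> X \<Longrightarrow> \<not> adj w v"
    and "x' \<in> PN V adj x X"
  shows "independent adj (X - {x} \<union> {x'})"
proof -
  have "\<not> adj z x'" "\<not> adj x' z" if "z \<in> X - {x}" for z
    using \<open>x' \<in> PN V adj x X\<close> that \<open>symp adj\<close> by (auto simp: PN_iff dest: sympD)
  moreover have "\<not> adj u v" if "u \<in> X - {x}" "v \<in> X - {x}" for u v
    using isolated[of v u] isolated[of u v] that \<open>symp adj\<close> \<open>irreflp adj\<close>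
    by (cases "u = v") (auto dest: sympD irreflpD)
  ultimately show ?thesis
    using \<open>irreflp adj\<close> unfolding independent_def by (auto dest: irreflpD)
qed

lemma IR_set_swap_private:
  assumes "simple_graph V adj" "X \<in> IR_sets V adj" "x \<in> X" "y \<in> X" "adj x y"
    and isolated: "\<And>v w. v \<in> X - {x, y} \<Longrightarrow> w \<in> X \<Longrightarrow> \<not> adj w v"
    and x': "x' \<in> PN V adj x X"
  shows "X - {x} \<union> {x'} \<in> IR_sets V adj"
proof (rule IR_setsI[OF _ _ assms(2)])
  have sym: "symp adj" using simple_graph_symp[OF assms(1)] .
  have "y \<in> X - {x}" "adj y x"
    using assms(4,5) simple_graph_irreflp[OF assms(1)] sym by (auto dest: irreflpD sympD)
  then have "x' \<notin> X" using PN_of_non_isolated(2)[OF sym _ _ x'] by blast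
  moreover have "finite X"
    using assms(1) IR_sets_subset[OF assms(2)] by (auto simp: simple_graph_def intro: finite_subset)
  ultimately show "card (X - {x} \<union> {x'}) = card X"
    using card_Suc_Diff1[OF \<open>finite X\<close> \<open>x \<in> X\<close>] by simp
  have "X - {x} \<union> {x'} \<subseteq> V"
    using IR_sets_subset[OF assms(2)] x' by (auto simp: PN_iff)
  then show "irredundant V adj (X - {x} \<union> {x'})"
    using independent_swap_private[OF sym simple_graph_irreflp[OF assms(1)] isolated x']
    by (rule independent_imp_irredundant)
qed

lemma IR_set_double_swap_private:
  assumes "simple_graph V adj" "X \<in> IR_sets V adj" "x \<in> X" "y \<in> X" "x \<noteq> y"
    and isolated: "\<And>v w. v \<in> X - {x, y} \<Longrightarrow> w \<in> X \<Longrightarrow> \<not> adj w v"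
    and "x' \<in> PN V adj x X" "y' \<in> PN V adj y X"
  shows "X - {x, y} \<union> {x', y'} \<in> IR_sets V adj"
proof -
  define p where "p u = (if u = x then x' else if u = y then y' else u)" for u
  have p: "p u \<in> PN V adj u X" if "u \<in> X" for u
    using that assms(7,8) isolated IR_sets_subset[OF assms(2)] by (auto simp: p_def PN_iff)
  have "p ` X = X - {x, y} \<union> {x', y'}"
    using assms(3-5) by (auto simp: p_def)
  then show ?thesis
    using irredundant_image_private[OF simple_graph_symp[OF assms(1)] IR_sets_irredundant[OF assms(2)] p]
      IR_setsI assms(2) by metis
qed

lemma IR_graph_has_induced_C4:
  assumes "simple_graph V adj" "X \<in> IR_sets V adj" "x \<in> X" "y \<in> X" "adj x y"
    and isolated: "\<And>v w. v \<in> X - {x, y} \<Longrightarrow> w \<in> X \<Longrightarrow> \<not> adj w v"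
  shows "has_induced_C4 (IR_sets V adj) (IR_graph_adj V adj)"
proof -
  have sym: "symp adj" and "x \<noteq> y"
    using assms(1,5) simple_graph_symp simple_graph_irreflp by (blast dest: irreflpD)+
  have "\<forall>u\<in>X. PN V adj u X \<noteq> {}"
    using IR_sets_irredundant[OF assms(2)] by (simp add: irredundant_def)
  then obtain x' y' where x': "x' \<in> PN V adj x X" and y': "y' \<in> PN V adj y X"
    using assms(3,4) by blast
  have "y \<in> X - {x}" "adj y x" "x \<in> X - {y}" "adj x y"
    using assms(3-5) \<open>x \<noteq> y\<close> sym by (auto dest: sympD)
  then have "adj x x'" "x' \<notin> X" "\<not> adj y x'" "adj y y'" "y' \<notin> X" "\<not> adj x y'"
    using PN_of_non_isolated[OF sym _ _ x'] PN_of_non_isolated[OF sym _ _ y'] by blast+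
  then have "x' \<noteq> y'" by blast
  have isolated': "\<And>v w. v \<in> X - {y, x} \<Longrightarrow> w \<in> X \<Longrightarrow> \<not> adj w v"
    using isolated by (simp add: insert_commute)
  define Z where "Z = X - {x} \<union> {x'}"
  define P where "P = X - {x, y} \<union> {x', y'}"
  define W where "W = X - {y} \<union> {y'}"
  have Z: "Z \<in> IR_sets V adj"
    unfolding Z_def using IR_set_swap_private[OF assms x'] .
  have W: "W \<in> IR_sets V adj"
    unfolding W_def using IR_set_swap_private[OF assms(1,2,4,3) \<open>adj y x\<close> isolated' y'] .
  have P: "P \<in> IR_sets V adj"
    unfolding P_def using IR_set_double_swap_private[OF assms(1-4) \<open>x \<noteq> y\<close> isolated x' y'] .
  have "IR_graph_adj V adj X Z" "IR_graph_adj V adj Z P" "IR_graph_adj V adj P W" "IR_graph_adj V adj W X"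
    using assms(2) Z P W \<open>adj x x'\<close> \<open>adj y y'\<close> \<open>adj y x\<close> sym assms(3,4)
      \<open>x \<noteq> y\<close> \<open>x' \<notin> X\<close> \<open>y' \<notin> X\<close> \<open>x' \<noteq> y'\<close>
    by (intro IR_graph_adjI; force simp: Z_def P_def W_def dest: sympD)+
  moreover have "\<not> IR_graph_adj V adj X P"
    by (rule not_IR_graph_adj_if_two_removed[of x _ _ y])
      (use assms(3,4) \<open>x \<noteq> y\<close> \<open>x' \<notin> X\<close> \<open>y' \<notin> X\<close> in \<open>auto simp: P_def\<close>)
  moreover have "\<not> IR_graph_adj V adj Z W"
    by (rule not_IR_graph_adj_if_two_removed[of x' _ _ y])
      (use assms(4) \<open>x \<noteq> y\<close> \<open>x' \<notin> X\<close> \<open>y' \<notin> X\<close> \<open>x' \<noteq> y'\<close> in \<open>auto simp: Z_def W_def\<close>)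
  moreover have "distinct [X, Z, P, W]"
    using assms(3,4) \<open>x \<noteq> y\<close> \<open>x' \<notin> X\<close> \<open>y' \<notin> X\<close> \<open>x' \<noteq> y'\<close>
    by (auto simp: Z_def P_def W_def)
  ultimately show ?thesis
    unfolding has_induced_C4_def using assms(2) Z P W by blast
qed

theorem corollary4p2:
  fixes V :: "'a set" and adj :: "'a \<Rightarrow> 'a \<Rightarrow> bool"
  assumes "simple_graph V adj"
    and "\<exists>D\<in>IR_sets V adj. \<not> independent adj D"
    and "connected_graph (IR_sets V adj) (IR_graph_adj V adj)"
  shows "has_induced_C4 (IR_sets V adj) (IR_graph_adj V adj)
         \<or> diam (IR_sets V adj) (IR_graph_adj V adj) \<ge> 3"
proof -
  obtain X x y where X: "X \<in> IR_sets V adj" and "x \<in> X" "y \<in> X" "adj x y"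
    using assms(2) unfolding independent_def by blast
  have "x \<noteq> y" "adj y x"
    using \<open>adj x y\<close> simple_graph_irreflp[OF assms(1)] simple_graph_symp[OF assms(1)]
    by (auto dest: irreflpD sympD)
  show ?thesis
  proof (cases "\<exists>v\<in>X - {x, y}. \<exists>w\<in>X. adj w v")
    case True
    then obtain v where v: "v \<in> X - {x, y}" "\<exists>w\<in>X. adj w v" by blast
    have "card {x, y, v} \<le> diam (IR_sets V adj) (IR_graph_adj V adj)"
      by (rule card_non_isolated_le_diam_IR_graph[OF assms(1,3) X])
        (use \<open>x \<in> X\<close> \<open>y \<in> X\<close> \<open>adj x y\<close> \<open>adj y x\<close> v in auto)
    moreover have "card {x, y, v} = 3"
      using \<open>x \<noteq> y\<close> v(1) by auto
    ultimately show ?thesis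
      by simp
  next
    case False
    then show ?thesis
      using IR_graph_has_induced_C4[OF assms(1) X \<open>x \<in> X\<close> \<open>y \<in> X\<close> \<open>adj x y\<close>] by blast
  qed
qed

end
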